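(* Let $\mathcal T$ be a ternary algebra over $\mathbb C$, i.e. a complex vector space equipped with a trilinear ternary multiplication $(a,b,c)\mapsto a\cdot b\cdot c$ which is associative of the first kind or associative of the second kind (see context). Let $\omega$ be a primitive cube root of unity and $\overline\omega$ its complex conjugate. For $a,b,c\in\mathcal T$ define the ternary commutator $$[a,b,c]=a\cdot b\cdot c+\omega\,b\cdot c\cdot a+\overline\omega\,c\cdot a\cdot b+c\cdot b\cdot a+\overline\omega\,b\cdot a\cdot c+\omega\,a\cdot c\cdot b$$ and its conjugate $$[a,b,c]^\ast=a\cdot b\cdot c+\overline\omega\,b\cdot c\cdot a+\omega\,c\cdot a\cdot b+c\cdot b\cdot a+\omega\,b\cdot a\cdot c+\overline\omega\,a\cdot c\cdot b.$$ Then for all $a,b,c,d,f\in\mathcal T$: $$[a,b,c]=\omega\,[b,c,a]=\overline\omega\,[c,a,b],\qquad [a,b,c]^\ast=\overline\omega\,[b,c,a]^\ast=\omega\,[c,a,b]^\ast,$$ and the ternary commutator satisfies the identity $$\sum_{(x_1,x_2,x_3,x_4,x_5)}\Big(\big[[x_1,x_2,x_3],x_4,x_5\big]+\big[[x_1,x_4,x_2],x_5,x_3\big]+\big[[x_1,x_5,x_4],x_3,x_2\big]+\big[[x_1,x_3,x_5],x_2,x_4\big]\Big)=0,$$ where the sum runs over the five cyclic permutations $(x_1,x_2,x_3,x_4,x_5)\in\{(a,b,c,d,f),(b,c,d,f,a),(c,d,f,a,b),(d,f,a,b,c),(f,a,b,c,d)\}$.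
   Context: A ternary multiplication on a complex vector space $\mathcal T$ is a trilinear map $\mathcal T\times\mathcal T\times\mathcal T\to\mathcal T$, $(a,b,c)\mapsto a\cdot b\cdot c$. It is associative of the first kind if $(a\cdot b\cdot c)\cdot d\cdot f=a\cdot(b\cdot c\cdot d)\cdot f=a\cdot b\cdot(c\cdot d\cdot f)$ for all $a,b,c,d,f\in\mathcal T$, and associative of the second kind if $(a\cdot b\cdot c)\cdot d\cdot f=a\cdot(d\cdot c\cdot b)\cdot f=a\cdot b\cdot(c\cdot d\cdot f)$ for all $a,b,c,d,f\in\mathcal T$. A ternary algebra is a complex vector space with a ternary multiplication associative of the first or of the second kind. *)

theory Defs
  imports Complex_Main
begin

definition trilinear :: "(complex \<Rightarrow> 'v::ab_group_add \<Rightarrow> 'v) \<Rightarrow> ('v \<Rightarrow> 'v \<Rightarrow> 'v \<Rightarrow> 'v) \<Rightarrow> bool" where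
  "trilinear sc m \<longleftrightarrow>
     (\<forall>b c. Vector_Spaces.linear sc sc (\<lambda>x. m x b c)) \<and>
     (\<forall>a c. Vector_Spaces.linear sc sc (\<lambda>x. m a x c)) \<and>
     (\<forall>a b. Vector_Spaces.linear sc sc (\<lambda>x. m a b x))"

definition assoc_first_kind :: "('v \<Rightarrow> 'v \<Rightarrow> 'v \<Rightarrow> 'v) \<Rightarrow> bool" where
  "assoc_first_kind m \<longleftrightarrow>
     (\<forall>a b c d f. m (m a b c) d f = m a (m b c d) f \<and> m a (m b c d) f = m a b (m c d f))"

definition assoc_second_kind :: "('v \<Rightarrow> 'v \<Rightarrow> 'v \<Rightarrow> 'v) \<Rightarrow> bool" where
  "assoc_second_kind m \<longleftrightarrow>
     (\<forall>a b c d f. m (m a b c) d f = m a (m d c b) f \<and> m a (m d c b) f = m a b (m c d f))"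

definition ternary_algebra :: "(complex \<Rightarrow> 'v::ab_group_add \<Rightarrow> 'v) \<Rightarrow> ('v \<Rightarrow> 'v \<Rightarrow> 'v \<Rightarrow> 'v) \<Rightarrow> bool" where
  "ternary_algebra sc m \<longleftrightarrow> vector_space sc \<and> trilinear sc m \<and>
     (assoc_first_kind m \<or> assoc_second_kind m)"

definition tcomm :: "(complex \<Rightarrow> 'v::ab_group_add \<Rightarrow> 'v) \<Rightarrow> ('v \<Rightarrow> 'v \<Rightarrow> 'v \<Rightarrow> 'v) \<Rightarrow> complex \<Rightarrow> 'v \<Rightarrow> 'v \<Rightarrow> 'v \<Rightarrow> 'v" where
  "tcomm sc m w a b c =
     m a b c + sc w (m b c a) + sc (cnj w) (m c a b)
     + m c b a + sc (cnj w) (m b a c) + sc w (m a c b)"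

definition tcomm_conj :: "(complex \<Rightarrow> 'v::ab_group_add \<Rightarrow> 'v) \<Rightarrow> ('v \<Rightarrow> 'v \<Rightarrow> 'v \<Rightarrow> 'v) \<Rightarrow> complex \<Rightarrow> 'v \<Rightarrow> 'v \<Rightarrow> 'v \<Rightarrow> 'v" where
  "tcomm_conj sc m w a b c =
     m a b c + sc (cnj w) (m b c a) + sc w (m c a b)
     + m c b a + sc w (m b a c) + sc (cnj w) (m a c b)"

definition tcomm_J :: "(complex \<Rightarrow> 'v::ab_group_add \<Rightarrow> 'v) \<Rightarrow> ('v \<Rightarrow> 'v \<Rightarrow> 'v \<Rightarrow> 'v) \<Rightarrow> complex \<Rightarrow> 'v \<Rightarrow> 'v \<Rightarrow> 'v \<Rightarrow> 'v \<Rightarrow> 'v \<Rightarrow> 'v" where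
  "tcomm_J sc m w x1 x2 x3 x4 x5 =
     tcomm sc m w (tcomm sc m w x1 x2 x3) x4 x5
     + tcomm sc m w (tcomm sc m w x1 x4 x2) x5 x3
     + tcomm sc m w (tcomm sc m w x1 x5 x4) x3 x2
     + tcomm sc m w (tcomm sc m w x1 x3 x5) x2 x4"

end

theory Submission
  imports Defs
begin

text \<open>Since \<open>cnj w = w\<^sup>2\<close>, the six terms of \<open>w [b,c,a]\<close> are exactly those of \<open>[a,b,c]\<close>,
and the conjugate commutator is the commutator for the cube root \<open>cnj w\<close>. For the five-variable
identity, trilinearity and associativity of either kind bring every nested product to the form
\<open>m (m x y z) u v\<close>, and \<open>1 + w + w\<^sup>2 = 0\<close> turns every scalar into an integer combination of
\<open>1\<close> and \<open>w\<close>. The expanded sum is then a signed sum of such products and their \<open>w\<close>-multiples,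
whose terms cancel in pairs.\<close>

lemma cube_root_unity_cnj:
  fixes w :: complex
  assumes "w ^ 3 = 1"
  shows "cnj w = w\<^sup>2"
proof -
  have "norm w ^ 3 = 1"
    using assms by (metis norm_one norm_power)
  then have "norm w = 1"
    using power_eq_imp_eq_base[of "norm w" 3 1] by simp
  then have "w * cnj w = 1"
    by (simp add: complex_norm_square[symmetric])
  then have "cnj w = w ^ 3 * cnj w"
    using assms by simp
  also have "\<dots> = w\<^sup>2"
    using \<open>w * cnj w = 1\<close> by (simp add: power2_eq_square power3_eq_cube mult.assoc)
  finally show ?thesis .
qed

lemma cnj_cube_root_unity: "w ^ 3 = 1 \<Longrightarrow> cnj w ^ 3 = 1"
  by (metis complex_cnj_one complex_cnj_power)

lemma primitive_cube_root_unity: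
  fixes w :: complex
  assumes "w ^ 3 = 1" and "w \<noteq> 1"
  shows "w\<^sup>2 = - 1 - w"
proof -
  have "(w - 1) * (w\<^sup>2 + w + 1) = 0"
    using assms(1) by (simp add: algebra_simps power2_eq_square power3_eq_cube)
  then have "w\<^sup>2 + w + 1 = 0"
    using assms(2) by simp
  then show ?thesis
    by (simp add: eq_diff_eq eq_neg_iff_add_eq_0 add.commute)
qed

lemma scale_primitive_cube_root:
  assumes sc: "module sc" and "w ^ 3 = 1" and "w \<noteq> 1"
  shows "sc (cnj w) x = - x - sc w x"
    and "sc w (sc w x) = - x - sc w x"
proof -
  have "cnj w = - 1 - w" and "w * w = - 1 - w"
    using cube_root_unity_cnj primitive_cube_root_unity assms(2,3)
    by (simp_all add: power2_eq_square)
  then show "sc (cnj w) x = - x - sc w x" and "sc w (sc w x) = - x - sc w x"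
    by (simp_all add: module.scale_scale[OF sc] module.scale_left_diff_distrib[OF sc]
        module.scale_minus_left[OF sc] module.scale_one[OF sc])
qed

lemma tcomm_conj_eq_tcomm_cnj: "tcomm_conj sc m w = tcomm sc m (cnj w)"
  by (simp add: fun_eq_iff tcomm_def tcomm_conj_def)

lemma tcomm_rotate:
  assumes sc: "module sc" and "w ^ 3 = 1"
  shows "tcomm sc m w a b c = sc w (tcomm sc m w b c a)"
proof -
  have "w * w = cnj w" and "w * cnj w = 1"
    using cube_root_unity_cnj[OF assms(2)] assms(2)
    by (simp_all add: power2_eq_square power3_eq_cube mult.assoc)
  then show ?thesis
    unfolding tcomm_def
    by (simp add: module.scale_right_distrib[OF sc] module.scale_scale[OF sc]
        module.scale_one[OF sc] add_ac)
qed

lemma tcomm_rotate2: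
  assumes sc: "module sc" and "w ^ 3 = 1"
  shows "tcomm sc m w a b c = sc (cnj w) (tcomm sc m w c a b)"
proof -
  have "tcomm sc m w a b c = sc w (sc w (tcomm sc m w c a b))"
    using tcomm_rotate[OF assms] by metis
  also have "\<dots> = sc (cnj w) (tcomm sc m w c a b)"
    using cube_root_unity_cnj[OF assms(2)]
    by (simp add: module.scale_scale[OF sc] power2_eq_square)
  finally show ?thesis .
qed

lemma tcomm_conj_rotate:
  assumes "module sc" and "w ^ 3 = 1"
  shows "tcomm_conj sc m w a b c = sc (cnj w) (tcomm_conj sc m w b c a)"
  unfolding tcomm_conj_eq_tcomm_cnj
  by (rule tcomm_rotate[OF assms(1) cnj_cube_root_unity[OF assms(2)]])

lemma tcomm_conj_rotate2:
  assumes "module sc" and "w ^ 3 = 1"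
  shows "tcomm_conj sc m w a b c = sc w (tcomm_conj sc m w c a b)"
  using tcomm_rotate2[OF assms(1) cnj_cube_root_unity[OF assms(2)]]
  unfolding tcomm_conj_eq_tcomm_cnj complex_cnj_cnj .

lemma trilinear_module_hom:
  assumes "trilinear sc m"
  shows "module_hom sc sc (\<lambda>x. m x b c)"
    and "module_hom sc sc (\<lambda>x. m a x c)"
    and "module_hom sc sc (\<lambda>x. m a b x)"
  using assms by (simp_all add: trilinear_def module_hom_iff_linear)

lemmas trilinear_add = trilinear_module_hom[THEN module_hom.add]
lemmas trilinear_minus = trilinear_module_hom[THEN module_hom.neg]
lemmas trilinear_scale = trilinear_module_hom[THEN module_hom.scale]

\<comment> \<open>Turns \<open>x\<^sub>1 \<plusminus> \<dots> \<plusminus> x\<^sub>n = 0\<close> into \<open>P = N\<close>, with \<open>P\<close> and \<open>N\<close> the sums of the positive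
  and of the negated terms; a cancelling sum then has both sides equal up to AC.\<close>
lemmas separate_signs = add_uminus_conv_diff uminus_add_conv_diff diff_add_eq diff_diff_eq
  add_diff_eq diff_eq_eq eq_diff_eq add_0_left add_0_right

lemma tcomm_J_cyclic_sum_first_kind:
  assumes sc: "module sc" and tri: "trilinear sc m" and assoc: "assoc_first_kind m"
    and "w ^ 3 = 1" and "w \<noteq> 1"
  shows "tcomm_J sc m w a b c d f + tcomm_J sc m w b c d f a + tcomm_J sc m w c d f a b
      + tcomm_J sc m w d f a b c + tcomm_J sc m w f a b c d = 0"
proof -
  have mid: "\<And>a b c d f. m a (m b c d) f = m (m a b c) d f"
    and right: "\<And>a b c d f. m a b (m c d f) = m (m a b c) d f"
    using assoc unfolding assoc_first_kind_def by metis+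
  show ?thesis
    unfolding tcomm_J_def tcomm_def
    by (simp only: trilinear_add[OF tri] trilinear_minus[OF tri] trilinear_scale[OF tri]
          module.scale_right_distrib[OF sc] module.scale_minus_right[OF sc]
          scale_primitive_cube_root[OF sc assms(4,5)] mid right
          diff_conv_add_uminus minus_add_distrib minus_minus,
        simp only: add.assoc[symmetric], simp only: separate_signs, simp only: add_ac)
qed

lemma tcomm_J_cyclic_sum_second_kind:
  assumes sc: "module sc" and tri: "trilinear sc m" and assoc: "assoc_second_kind m"
    and "w ^ 3 = 1" and "w \<noteq> 1"
  shows "tcomm_J sc m w a b c d f + tcomm_J sc m w b c d f a + tcomm_J sc m w c d f a b
      + tcomm_J sc m w d f a b c + tcomm_J sc m w f a b c d = 0"
proof -
  have mid: "\<And>a b c d f. m a (m b c d) f = m (m a d c) b f"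
    and right: "\<And>a b c d f. m a b (m c d f) = m (m a b c) d f"
    using assoc unfolding assoc_second_kind_def by metis+
  show ?thesis
    unfolding tcomm_J_def tcomm_def
    by (simp only: trilinear_add[OF tri] trilinear_minus[OF tri] trilinear_scale[OF tri]
          module.scale_right_distrib[OF sc] module.scale_minus_right[OF sc]
          scale_primitive_cube_root[OF sc assms(4,5)] mid right
          diff_conv_add_uminus minus_add_distrib minus_minus,
        simp only: add.assoc[symmetric], simp only: separate_signs, simp only: add_ac)
qed

theorem theorem1:
  fixes sc :: "complex \<Rightarrow> 'v::ab_group_add \<Rightarrow> 'v"
    and m :: "'v \<Rightarrow> 'v \<Rightarrow> 'v \<Rightarrow> 'v"
    and w :: complex
  assumes "ternary_algebra sc m"
    and "w ^ 3 = 1" and "w \<noteq> 1"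
  shows "\<forall>a b c d f.
      tcomm sc m w a b c = sc w (tcomm sc m w b c a)
    \<and> tcomm sc m w a b c = sc (cnj w) (tcomm sc m w c a b)
    \<and> tcomm_conj sc m w a b c = sc (cnj w) (tcomm_conj sc m w b c a)
    \<and> tcomm_conj sc m w a b c = sc w (tcomm_conj sc m w c a b)
    \<and> tcomm_J sc m w a b c d f + tcomm_J sc m w b c d f a + tcomm_J sc m w c d f a b
      + tcomm_J sc m w d f a b c + tcomm_J sc m w f a b c d = 0"
proof -
  have sc: "module sc" and tri: "trilinear sc m"
    and assoc: "assoc_first_kind m \<or> assoc_second_kind m"
    using assms(1) by (simp_all add: ternary_algebra_def module_iff_vector_space)
  have "tcomm_J sc m w a b c d f + tcomm_J sc m w b c d f a + tcomm_J sc m w c d f a b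
      + tcomm_J sc m w d f a b c + tcomm_J sc m w f a b c d = 0" for a b c d f
    using assoc tcomm_J_cyclic_sum_first_kind[OF sc tri _ assms(2,3)]
      tcomm_J_cyclic_sum_second_kind[OF sc tri _ assms(2,3)]
    by blast
  then show ?thesis
    by (intro allI conjI tcomm_rotate[OF sc assms(2)] tcomm_rotate2[OF sc assms(2)]
        tcomm_conj_rotate[OF sc assms(2)] tcomm_conj_rotate2[OF sc assms(2)])
qed

end
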